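(* Let $\Lambda\subset\mathbb C$ be the hexagonal lattice with minimal distance $\sqrt3$ between distinct points, containing $0$ (the centers of a tiling of the plane by regular hexagons of side $1$). For $n\ge2$ let $\lambda_1=0,\lambda_2,\dots,\lambda_n$ be $n$ distinct points of $\Lambda$ of smallest moduli, $0=|\lambda_1|\le\cdots\le|\lambda_n|$, and $A_0=\mathrm{Diag}(\lambda_1,\dots,\lambda_n)$ with eigenpairs $(\lambda_i,e_i)$. Then \[ \mu(A_0)^2=\max_i\mu(A_0,\lambda_i,e_i)^2\le\frac{\sqrt3\,\pi}{27}\,n^2+o(n^2)\qquad(n\to\infty). \]
   Context: For $Av=\lambda v$, $A_{\lambda,v}=\Pi_{v^\perp}(\lambda I_n-A)|_{v^\perp}$ and $\mu(A,\lambda,v)=\max(1,\|A\|_F\|A_{\lambda,v}^{-1}\|)$; for a diagonal matrix with distinct diagonal entries this gives $\max_i\mu(A_0,\lambda_i,e_i)^2=\max\big(1,(|\lambda_1|^2+\cdots+|\lambda_n|^2)\max_{i\ne j}|\lambda_i-\lambda_j|^{-2}\big)$. $e_i$ is the $i$-th canonical basis vector. *)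

theory Defs
  imports Complex_Main "HOL-Library.Landau_Symbols"
begin

text \<open>Vectors of C^n are represented as functions nat => complex (only the
  coordinates i < n matter); n x n complex matrices as nat => nat => complex.\<close>

definition cinner :: "nat \<Rightarrow> (nat \<Rightarrow> complex) \<Rightarrow> (nat \<Rightarrow> complex) \<Rightarrow> complex" where
  "cinner n x y = (\<Sum>i<n. x i * cnj (y i))"

definition vnorm :: "nat \<Rightarrow> (nat \<Rightarrow> complex) \<Rightarrow> real" where
  "vnorm n x = sqrt (\<Sum>i<n. (cmod (x i))\<^sup>2)"

definition frob_norm :: "nat \<Rightarrow> (nat \<Rightarrow> nat \<Rightarrow> complex) \<Rightarrow> real" where
  "frob_norm n A = sqrt (\<Sum>i<n. \<Sum>j<n. (cmod (A i j))\<^sup>2)"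

definition mat_vec :: "nat \<Rightarrow> (nat \<Rightarrow> nat \<Rightarrow> complex) \<Rightarrow> (nat \<Rightarrow> complex) \<Rightarrow> (nat \<Rightarrow> complex)" where
  "mat_vec n A x = (\<lambda>i. if i < n then (\<Sum>j<n. A i j * x j) else 0)"

definition perp_space :: "nat \<Rightarrow> (nat \<Rightarrow> complex) \<Rightarrow> (nat \<Rightarrow> complex) set" where
  "perp_space n v = {x. (\<forall>i\<ge>n. x i = 0) \<and> cinner n x v = 0}"

definition proj_perp :: "nat \<Rightarrow> (nat \<Rightarrow> complex) \<Rightarrow> (nat \<Rightarrow> complex) \<Rightarrow> (nat \<Rightarrow> complex)" where
  "proj_perp n v x = (\<lambda>i. if i < n then x i - (cinner n x v / cinner n v v) * v i else 0)"

text \<open>The map A_{lambda,v} = Pi_{v^perp} (lambda I - A) restricted to v^perp.\<close>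
definition A_restr :: "nat \<Rightarrow> (nat \<Rightarrow> nat \<Rightarrow> complex) \<Rightarrow> complex \<Rightarrow> (nat \<Rightarrow> complex)
    \<Rightarrow> (nat \<Rightarrow> complex) \<Rightarrow> (nat \<Rightarrow> complex)" where
  "A_restr n A lam v x = proj_perp n v (\<lambda>i. lam * x i - mat_vec n A x i)"

definition inv_op_norm :: "nat \<Rightarrow> (nat \<Rightarrow> nat \<Rightarrow> complex) \<Rightarrow> complex \<Rightarrow> (nat \<Rightarrow> complex) \<Rightarrow> real" where
  "inv_op_norm n A lam v =
     Sup {vnorm n (the_inv_into (perp_space n v) (A_restr n A lam v) y) / vnorm n y
          | y. y \<in> perp_space n v \<and> vnorm n y \<noteq> 0}"

definition mu :: "nat \<Rightarrow> (nat \<Rightarrow> nat \<Rightarrow> complex) \<Rightarrow> complex \<Rightarrow> (nat \<Rightarrow> complex) \<Rightarrow> real" where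
  "mu n A lam v = max 1 (frob_norm n A * inv_op_norm n A lam v)"

definition diag_mat :: "(nat \<Rightarrow> complex) \<Rightarrow> (nat \<Rightarrow> nat \<Rightarrow> complex)" where
  "diag_mat l = (\<lambda>i j. if i = j then l i else 0)"

definition unit_vec :: "nat \<Rightarrow> (nat \<Rightarrow> complex)" where
  "unit_vec i = (\<lambda>j. if j = i then 1 else 0)"

definition hex_lattice :: "complex set" where
  "hex_lattice = {complex_of_real (sqrt 3) * (of_int a + of_int b * cis (pi / 3)) | a b. True}"

definition smallest_hex_points :: "nat \<Rightarrow> (nat \<Rightarrow> complex) \<Rightarrow> bool" where
  "smallest_hex_points n l \<longleftrightarrow>
     (\<forall>i<n. l i \<in> hex_lattice) \<and> inj_on l {..<n} \<and> l 0 = 0 \<and>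
     (\<forall>i j. i \<le> j \<longrightarrow> j < n \<longrightarrow> cmod (l i) \<le> cmod (l j)) \<and>
     (\<forall>z\<in>hex_lattice. z \<notin> l ` {..<n} \<longrightarrow> cmod (l (n - 1)) \<le> cmod z)"

end

theory Submission
  imports Defs "HOL-Real_Asymp.Real_Asymp"
begin

(* For the diagonal matrix A0 = diag(l 0, ..., l (n-1)) and the eigenpair
   (l i, e_i), the map A_{l i, e_i} acts on e_i^perp as the diagonal map with entries
   l i - l j (j ~= i).  If all these differences have modulus at least d, its inverse has
   operator norm at most 1/d, hence mu^2 <= max 1 (||A0||_F^2 / d^2) with
   ||A0||_F^2 = sum |l j|^2.  For hexagonal lattice points d^2 = 3.

   To bound sum |l j|^2, write lattice points as sqrt 3 (a + b e^{i pi/3}), so that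
   |z|^2 = 3 (a^2 + ab + b^2).  Three rhombi around the origin give 3m^2 + 1 lattice points
   of squared modulus at most 3m^2; hence the k-th smallest point satisfies
   |l k|^2 <= k + O(sqrt n), so sum |l j|^2 <= n^2/2 + O(n^(3/2)) and
   max_i mu^2 <= n^2/6 + O(n^(3/2)).  Finally 1/6 <= sqrt 3 pi / 27. *)

section \<open>Coordinates on the hexagonal lattice\<close>

definition hex_point :: "int \<Rightarrow> int \<Rightarrow> complex" where
  "hex_point a b = complex_of_real (sqrt 3) * (of_int a + of_int b * cis (pi / 3))"

lemma hex_lattice_iff: "z \<in> hex_lattice \<longleftrightarrow> (\<exists>a b. z = hex_point a b)"
  by (auto simp: hex_lattice_def hex_point_def)

lemma hex_point_diff: "hex_point a b - hex_point c d = hex_point (a - c) (b - d)"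
  by (simp add: hex_point_def algebra_simps)

lemma hex_point_norm2: "(cmod (hex_point a b))\<^sup>2 = 3 * (real_of_int a ^ 2 + a * b + b ^ 2)"
proof -
  have "Re (hex_point a b) = sqrt 3 * (a + b / 2)" "Im (hex_point a b) = 3 * b / 2"
    by (simp_all add: hex_point_def cis.code cos_60 sin_60)
  thus ?thesis unfolding cmod_power2 by (simp only:) (simp add: power2_eq_square algebra_simps)
qed

lemma norm_form_ge_1:
  fixes a b :: int assumes "(a, b) \<noteq> (0, 0)" shows "a^2 + a*b + b^2 \<ge> 1"
proof -
  have "4 * (a^2 + a*b + b^2) = (2*a+b)^2 + 3 * b^2" by algebra
  moreover have "(2*a+b)^2 + 3 * b^2 > 0" using assms
    by (smt (verit) power2_less_eq_zero_iff prod.inject zero_le_power2)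
  ultimately have "0 < 4 * (a^2 + a*b + b^2)" by (simp only:)
  thus ?thesis by simp
qed

lemma hex_point_separated:
  assumes "(a, b) \<noteq> (c, d)" shows "(cmod (hex_point a b - hex_point c d))\<^sup>2 \<ge> 3"
proof -
  have "(a - c, b - d) \<noteq> (0, 0)" using assms by auto
  hence "(a-c)^2 + (a-c)*(b-d) + (b-d)^2 \<ge> 1" by (rule norm_form_ge_1)
  hence "real_of_int ((a-c)^2 + (a-c)*(b-d) + (b-d)^2) \<ge> 1" by linarith
  thus ?thesis unfolding hex_point_diff hex_point_norm2 by simp
qed

lemma hex_point_inj: "inj (\<lambda>(a, b). hex_point a b)"
proof (rule injI, clarify, rule ccontr)
  fix a b c d assume "hex_point a b = hex_point c d" "\<not> (a = c \<and> b = d)"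
  thus False using hex_point_separated[of a b c d] by simp
qed

lemma hex_lattice_separated:
  assumes "z \<in> hex_lattice" "w \<in> hex_lattice" "z \<noteq> w" shows "(cmod (z - w))\<^sup>2 \<ge> 3"
proof -
  obtain a b c d where "z = hex_point a b" "w = hex_point c d"
    using assms(1,2) unfolding hex_lattice_iff by blast
  thus ?thesis using assms(3) hex_point_separated[of a b c d] by auto
qed

section \<open>Counting lattice points in a hexagon\<close>

text \<open>The coordinate square [1, m] x [1, m]; three sheared copies of it tile a
  lattice hexagon around the origin.\<close>
definition coord_square :: "nat \<Rightarrow> (int \<times> int) set" where
  "coord_square m = {1..int m} \<times> {1..int m}"

definition hexagon_coords :: "nat \<Rightarrow> (int \<times> int) set" where
  "hexagon_coords m = insert (0, 0)
     ((\<lambda>(s, t). (s - t, t)) ` coord_square m \<union> (\<lambda>(t, r). (- t, t - r)) ` coord_square m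
      \<union> (\<lambda>(s, r). (s, - r)) ` coord_square m)"

lemma card_hexagon_coords: "card (hexagon_coords m) = 3 * m * m + 1"
proof -
  let ?Q1 = "(\<lambda>(s, t). (s - t, t)) ` coord_square m"
  let ?Q2 = "(\<lambda>(t, r). (- t, t - r)) ` coord_square m"
  let ?Q3 = "(\<lambda>(s, r). (s, - r)) ` coord_square m"
  have sq: "card (coord_square m) = m * m" "finite (coord_square m)"
    by (simp_all add: coord_square_def card_cartesian_product)
  have "inj_on (\<lambda>(s, t). (s - t, t :: int)) (coord_square m)"
       "inj_on (\<lambda>(t, r). (- t, t - r :: int)) (coord_square m)"
       "inj_on (\<lambda>(s, r). (s, - r :: int)) (coord_square m)"
    by (auto simp: inj_on_def)
  hence card: "card ?Q1 = m * m" "card ?Q2 = m * m" "card ?Q3 = m * m"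
    using sq by (simp_all add: card_image)
  have disj: "?Q1 \<inter> ?Q2 = {}" "(?Q1 \<union> ?Q2) \<inter> ?Q3 = {}" "(0, 0) \<notin> ?Q1 \<union> ?Q2 \<union> ?Q3"
    by (auto simp: coord_square_def)
  have "card (?Q1 \<union> ?Q2 \<union> ?Q3) = 3 * m * m"
    using card disj sq(2) by (simp add: card_Un_disjoint)
  thus ?thesis using disj(3) sq(2) by (simp add: hexagon_coords_def)
qed

text \<open>On each sheared square the norm form becomes s^2 - st + t^2 with s, t in [1, m].\<close>
lemma norm_form_square_bound:
  fixes s t m :: int assumes "0 \<le> s" "s \<le> m" "0 \<le> t" "t \<le> m"
  shows "s^2 - s*t + t^2 \<le> m^2"
proof -
  have "s^2 - s*t + t^2 = max s t ^ 2 - min s t * (max s t - min s t)"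
    by (simp add: max_def min_def power2_eq_square algebra_simps)
  also have "\<dots> \<le> max s t ^ 2" using assms by simp
  also have "\<dots> \<le> m^2" using assms by (simp add: power_mono)
  finally show ?thesis .
qed

lemma hexagon_coords_norm_form:
  assumes "(a, b) \<in> hexagon_coords m" shows "a^2 + a*b + b^2 \<le> int m ^ 2"
proof -
  from assms consider "a = 0 \<and> b = 0"
    | s t where "a = s - t" "b = t" "(s, t) \<in> coord_square m"
    | t r where "a = - t" "b = t - r" "(t, r) \<in> coord_square m"
    | s r where "a = s" "b = - r" "(s, r) \<in> coord_square m"
    unfolding hexagon_coords_def by auto
  thus ?thesis
  proof cases
    case (2 s t)
    have "s^2 - s*t + t^2 \<le> int m ^ 2"
      using 2 by (intro norm_form_square_bound) (auto simp: coord_square_def)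
    thus ?thesis unfolding 2(1,2) by (simp add: power2_eq_square algebra_simps)
  next
    case (3 t r)
    have "t^2 - t*r + r^2 \<le> int m ^ 2"
      using 3 by (intro norm_form_square_bound) (auto simp: coord_square_def)
    thus ?thesis unfolding 3(1,2) by (simp add: power2_eq_square algebra_simps)
  next
    case (4 s r)
    have "s^2 - s*r + r^2 \<le> int m ^ 2"
      using 4 by (intro norm_form_square_bound) (auto simp: coord_square_def)
    thus ?thesis unfolding 4(1,2) by (simp add: power2_eq_square algebra_simps)
  qed simp
qed

lemma hex_lattice_points_in_disc:
  "\<exists>Z. Z \<subseteq> hex_lattice \<and> finite Z \<and> card Z = 3 * m * m + 1 \<and>
       (\<forall>z\<in>Z. (cmod z)\<^sup>2 \<le> 3 * (real m)\<^sup>2)"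
proof (intro exI conjI ballI)
  let ?Z = "(\<lambda>(a, b). hex_point a b) ` hexagon_coords m"
  have fin: "finite (hexagon_coords m)"
    by (simp add: hexagon_coords_def coord_square_def)
  show "?Z \<subseteq> hex_lattice" using hex_lattice_iff by auto
  show "finite ?Z" using fin by simp
  show "card ?Z = 3 * m * m + 1"
    using card_image[OF inj_on_subset[OF hex_point_inj]] card_hexagon_coords by simp
  fix z assume "z \<in> ?Z"
  then obtain a b where ab: "(a, b) \<in> hexagon_coords m" "z = hex_point a b" by auto
  have "real_of_int (a^2 + a*b + b^2) \<le> real_of_int (int m ^ 2)"
    using hexagon_coords_norm_form[OF ab(1)] by (simp only: of_int_le_iff)
  thus "(cmod z)\<^sup>2 \<le> 3 * (real m)\<^sup>2" unfolding ab(2) hex_point_norm2 by simp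
qed

section \<open>Moduli of the n smallest lattice points\<close>

lemma smallest_hex_points_separated:
  assumes "smallest_hex_points n l" "i < n" "j < n" "j \<noteq> i"
  shows "sqrt 3 \<le> cmod (l i - l j)"
proof (rule real_le_lsqrt)
  have "l i \<in> hex_lattice" "l j \<in> hex_lattice" "l i \<noteq> l j"
    using assms unfolding smallest_hex_points_def inj_on_def by auto
  thus "3 \<le> (cmod (l i - l j))\<^sup>2" by (rule hex_lattice_separated)
qed simp

lemma smallest_hex_point_le_radius:
  assumes sm: "smallest_hex_points n l" and k: "k < n"
    and Z: "Z \<subseteq> hex_lattice" "finite Z" "card Z > k" and r: "\<forall>z\<in>Z. cmod z \<le> r"
  shows "cmod (l k) \<le> r"
proof (rule ccontr)
  assume "\<not> cmod (l k) \<le> r"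
  hence big: "r < cmod (l k)" by simp
  have mono: "\<And>i j. i \<le> j \<Longrightarrow> j < n \<Longrightarrow> cmod (l i) \<le> cmod (l j)"
    and outside: "\<And>z. z \<in> hex_lattice \<Longrightarrow> z \<notin> l ` {..<n} \<Longrightarrow> cmod (l (n - 1)) \<le> cmod z"
    using sm unfolding smallest_hex_points_def by auto
  have "Z \<subseteq> l ` {..<k}"
  proof
    fix z assume zZ: "z \<in> Z"
    have lt: "cmod z < cmod (l k)" using r zZ big by force
    moreover have "cmod (l k) \<le> cmod (l (n - 1))" using mono[of k "n - 1"] k by simp
    ultimately have "z \<in> l ` {..<n}" using outside[of z] zZ Z(1) by force
    then obtain j where j: "j < n" "z = l j" by auto
    have "j < k" using mono[of k j] j lt by (cases "j < k") auto
    thus "z \<in> l ` {..<k}" using j by auto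
  qed
  hence "card Z \<le> card (l ` {..<k})" by (simp add: card_mono)
  also have "\<dots> \<le> k" using card_image_le[of "{..<k}" l] by simp
  finally show False using Z(3) by simp
qed

text \<open>Quantitative form: |l k|^2 <= k + O(sqrt n), using the hexagon of side
  m = ceiling (sqrt (k/3)).\<close>
lemma smallest_hex_point_norm2_bound:
  assumes sm: "smallest_hex_points n l" and k: "k < n"
  shows "(cmod (l k))\<^sup>2 \<le> real k + 6 * sqrt (real n) + 3"
proof -
  define x where "x = sqrt (real k / 3)"
  define m where "m = nat \<lceil>x\<rceil>"
  have x0: "x \<ge> 0" by (simp add: x_def)
  have m_ge: "x \<le> real m" unfolding m_def by (rule real_nat_ceiling_ge)
  have m_le: "real m \<le> x + 1" unfolding m_def using of_int_ceiling_le_add_one[of x] x0 by simp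
  have "real k \<le> 3 * (real m)^2"
    using power_mono[OF m_ge x0, of 2] by (simp add: x_def)
  hence "k < 3 * m * m + 1" by (simp add: power2_eq_square) (metis of_nat_le_iff of_nat_mult
        of_nat_numeral mult.assoc less_Suc_eq_le)
  obtain Z where Z: "Z \<subseteq> hex_lattice" "finite Z" "card Z = 3 * m * m + 1"
    "\<forall>z\<in>Z. (cmod z)\<^sup>2 \<le> 3 * (real m)\<^sup>2" using hex_lattice_points_in_disc by blast
  have "\<forall>z\<in>Z. cmod z \<le> sqrt (3 * (real m)\<^sup>2)" using Z(4) real_le_rsqrt by blast
  hence "cmod (l k) \<le> sqrt (3 * (real m)\<^sup>2)"
    using smallest_hex_point_le_radius[OF sm k Z(1,2)] Z(3) \<open>k < 3 * m * m + 1\<close> by simp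
  hence "(cmod (l k))\<^sup>2 \<le> 3 * (real m)\<^sup>2"
    using power_mono[of "cmod (l k)" _ 2] by fastforce
  also have "\<dots> \<le> 3 * (x + 1)^2" using m_le by (simp add: power_mono)
  also have "\<dots> = real k + 6 * x + 3" by (simp add: x_def power2_eq_square algebra_simps)
  also have "x \<le> sqrt (real n)" unfolding x_def using k by simp
  finally show ?thesis by simp
qed

lemma sum_smallest_hex_points_norm2:
  assumes sm: "smallest_hex_points n l"
  shows "(\<Sum>i<n. (cmod (l i))\<^sup>2) \<le> (real n)\<^sup>2 / 2 + real n * (6 * sqrt (real n) + 3)"
proof -
  have gauss: "(\<Sum>k<n. real k) \<le> (real n)\<^sup>2 / 2"
    by (induction n) (auto simp: power2_eq_square field_simps)
  have "(\<Sum>i<n. (cmod (l i))\<^sup>2) \<le> (\<Sum>k<n. real k + (6 * sqrt (real n) + 3))"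
    using smallest_hex_point_norm2_bound[OF sm] by (intro sum_mono) (simp add: add.assoc)
  also have "\<dots> = (\<Sum>k<n. real k) + real n * (6 * sqrt (real n) + 3)"
    by (simp add: sum.distrib)
  finally show ?thesis using gauss by linarith
qed

section \<open>The condition number of a diagonal matrix\<close>

lemma cinner_unit_vec: "i < n \<Longrightarrow> cinner n x (unit_vec i) = x i"
  by (simp add: cinner_def unit_vec_def if_distrib[where f = cnj]
      if_distrib[where f = "\<lambda>z. _ * z"] cong: if_cong)

lemma perp_space_unit_vec:
  "i < n \<Longrightarrow> x \<in> perp_space n (unit_vec i) \<longleftrightarrow> (\<forall>j\<ge>n. x j = 0) \<and> x i = 0"
  by (simp add: perp_space_def cinner_unit_vec)

lemma vnorm_unit_vec: "j < n \<Longrightarrow> vnorm n (unit_vec j) = 1"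
  by (simp add: vnorm_def unit_vec_def if_distrib[where f = "\<lambda>z. (cmod z)\<^sup>2"] cong: if_cong)

lemma frob_norm_diag_mat: "(frob_norm n (diag_mat l))\<^sup>2 = (\<Sum>i<n. (cmod (l i))\<^sup>2)"
  by (simp add: frob_norm_def diag_mat_def sum_nonneg
      if_distrib[where f = "\<lambda>z. (cmod z)\<^sup>2"] cong: if_cong)

lemma A_restr_diag_mat:
  assumes "i < n"
  shows "A_restr n (diag_mat l) (l i) (unit_vec i) x =
           (\<lambda>j. if j < n \<and> j \<noteq> i then (l i - l j) * x j else 0)"
proof -
  have "mat_vec n (diag_mat l) x = (\<lambda>j. if j < n then l j * x j else 0)"
    by (simp add: mat_vec_def diag_mat_def if_distrib[where f = "\<lambda>z. z * x _"] cong: if_cong)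
  thus ?thesis using assms unfolding A_restr_def proj_perp_def cinner_unit_vec[OF assms]
    by (auto simp: unit_vec_def algebra_simps)
qed

lemma inv_op_norm_diag_mat_le:
  assumes i: "i < n" and n2: "n \<ge> 2" and d: "d > 0"
    and sep: "\<And>j. j < n \<Longrightarrow> j \<noteq> i \<Longrightarrow> d \<le> cmod (l i - l j)"
  shows "inv_op_norm n (diag_mat l) (l i) (unit_vec i) \<le> 1 / d"
proof -
  let ?P = "perp_space n (unit_vec i)"
  let ?T = "A_restr n (diag_mat l) (l i) (unit_vec i)"
  note T = A_restr_diag_mat[OF i] and P = perp_space_unit_vec[OF i]
  have ne0: "l i - l j \<noteq> 0" if "j < n" "j \<noteq> i" for j
    using sep[OF that] d by auto
  have inj: "inj_on ?T ?P"
  proof (rule inj_onI, rule ext)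
    fix x y j assume x: "x \<in> ?P" and y: "y \<in> ?P" and eq: "?T x = ?T y"
    show "x j = y j"
    proof (cases "j < n \<and> j \<noteq> i")
      case True
      thus ?thesis using fun_cong[OF eq, of j] ne0[of j] T by simp
    next
      case False
      thus ?thesis using x y P by (metis not_le)
    qed
  qed
  obtain j0 where j0: "j0 < n" "j0 \<noteq> i"
    using n2 i by (intro that[of "if i = 0 then 1 else 0"]) auto
  have "unit_vec j0 \<in> ?P" using j0 P by (auto simp: unit_vec_def)
  hence nonempty:
    "{vnorm n (the_inv_into ?P ?T y) / vnorm n y | y. y \<in> ?P \<and> vnorm n y \<noteq> 0} \<noteq> {}"
    using vnorm_unit_vec[OF j0(1)] by fastforce
  show ?thesis unfolding inv_op_norm_def
  proof (rule cSup_least[OF nonempty], clarify)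
    fix y assume yP: "y \<in> ?P" and yn: "vnorm n y \<noteq> 0"
    define x where "x = (\<lambda>j. if j < n \<and> j \<noteq> i then y j / (l i - l j) else 0)"
    have xP: "x \<in> ?P" using P by (auto simp: x_def)
    have "?T x = y"
    proof
      fix j show "?T x j = y j" using T ne0 yP P by (auto simp: x_def)
    qed
    hence inv: "the_inv_into ?P ?T y = x" by (rule the_inv_into_f_eq[OF inj _ xP])
    have "(cmod (x j))\<^sup>2 \<le> (cmod (y j))\<^sup>2 / d\<^sup>2" if "j < n" for j
    proof (cases "j = i")
      case False
      have "(cmod (x j))\<^sup>2 = (cmod (y j))\<^sup>2 / (cmod (l i - l j))\<^sup>2"
        using False that by (simp add: x_def norm_divide power_divide)
      also have "\<dots> \<le> (cmod (y j))\<^sup>2 / d\<^sup>2"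
        using sep[OF that False] d
        by (intro divide_left_mono power_mono mult_pos_pos zero_less_power) auto
      finally show ?thesis .
    qed (simp add: x_def)
    hence "(\<Sum>j<n. (cmod (x j))\<^sup>2) \<le> (\<Sum>j<n. (cmod (y j))\<^sup>2) / d\<^sup>2"
      unfolding sum_divide_distrib by (intro sum_mono) auto
    hence "vnorm n x \<le> sqrt ((\<Sum>j<n. (cmod (y j))\<^sup>2) / d\<^sup>2)"
      unfolding vnorm_def by (rule real_sqrt_le_mono)
    also have "\<dots> = vnorm n y / d" using d by (simp add: vnorm_def real_sqrt_divide)
    finally have "vnorm n x \<le> vnorm n y / d" .
    moreover have "vnorm n y > 0" using yn by (simp add: vnorm_def sum_nonneg order_less_le)
    ultimately show "vnorm n (the_inv_into ?P ?T y) / vnorm n y \<le> 1 / d"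
      unfolding inv by (simp add: divide_le_eq)
  qed
qed

lemma max_1_power2:
  fixes x :: real assumes "x \<ge> 0" shows "(max 1 x)\<^sup>2 = max 1 (x\<^sup>2)"
proof (cases "x \<le> 1")
  case True
  hence "x\<^sup>2 \<le> 1" using assms by (simp add: power_le_one)
  thus ?thesis using True by (simp add: max_def)
next
  case False
  hence "x\<^sup>2 \<ge> 1" by (simp add: one_le_power)
  thus ?thesis using False by (simp add: max_def)
qed

lemma mu_diag_mat_power2_le:
  assumes i: "i < n" and n2: "n \<ge> 2" and d: "d > 0"
    and sep: "\<And>j. j < n \<Longrightarrow> j \<noteq> i \<Longrightarrow> d \<le> cmod (l i - l j)"
  shows "(mu n (diag_mat l) (l i) (unit_vec i))\<^sup>2 \<le> max 1 ((\<Sum>j<n. (cmod (l j))\<^sup>2) / d\<^sup>2)"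
proof -
  let ?F = "frob_norm n (diag_mat l)"
  have F0: "?F \<ge> 0" unfolding frob_norm_def by (simp add: sum_nonneg)
  have "inv_op_norm n (diag_mat l) (l i) (unit_vec i) \<le> 1 / d"
    using inv_op_norm_diag_mat_le[OF i n2 d, of l] sep by blast
  hence "?F * inv_op_norm n (diag_mat l) (l i) (unit_vec i) \<le> ?F * (1 / d)"
    using F0 by (rule mult_left_mono)
  hence "mu n (diag_mat l) (l i) (unit_vec i) \<le> max 1 (?F / d)"
    unfolding mu_def by auto
  hence "(mu n (diag_mat l) (l i) (unit_vec i))\<^sup>2 \<le> (max 1 (?F / d))\<^sup>2"
    by (rule power_mono) (simp add: mu_def)
  also have "\<dots> = max 1 (?F\<^sup>2 / d\<^sup>2)"
    using F0 d by (simp add: max_1_power2 power_divide)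
  finally show ?thesis unfolding frob_norm_diag_mat .
qed

definition error_term :: "nat \<Rightarrow> real" where
  "error_term n = 1 + real n * (2 * sqrt (real n) + 1)"

lemma error_term_small_o: "error_term \<in> o(\<lambda>n. (real n)\<^sup>2)"
  unfolding error_term_def by real_asymp

lemma one_sixth_le_constant: "1 / 6 \<le> sqrt 3 * pi / 27"
proof -
  have "17 / 10 \<le> sqrt 3" by (rule real_le_rsqrt) (simp add: power2_eq_square)
  moreover have "3 \<le> pi" using sin_x_le_x[of "pi / 6"] sin_30 by simp
  ultimately have "17 / 10 * 3 \<le> sqrt 3 * pi" by (intro mult_mono) auto
  thus ?thesis by simp
qed

lemma smallest_hex_points_mu_bound:
  assumes "smallest_hex_points n l"
  shows "max 1 ((\<Sum>j<n. (cmod (l j))\<^sup>2) / 3) \<le> sqrt 3 * pi / 27 * (real n)\<^sup>2 + error_term n"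
proof -
  have "(\<Sum>j<n. (cmod (l j))\<^sup>2) / 3 \<le> (real n)\<^sup>2 / 6 + real n * (2 * sqrt (real n) + 1)"
    using sum_smallest_hex_points_norm2[OF assms] by (simp add: field_simps)
  moreover have "(real n)\<^sup>2 / 6 \<le> sqrt 3 * pi / 27 * (real n)\<^sup>2"
    using mult_right_mono[OF one_sixth_le_constant, of "(real n)\<^sup>2"] by simp
  moreover have "0 \<le> sqrt 3 * pi / 27 * (real n)\<^sup>2" "0 \<le> real n * (2 * sqrt (real n) + 1)"
    by simp_all
  ultimately show ?thesis unfolding error_term_def by (intro max.boundedI) linarith+
qed

theorem mainTheorem4:
  shows "\<exists>f :: nat \<Rightarrow> real. f \<in> o(\<lambda>n. (real n)\<^sup>2) \<and>
    (\<forall>n l. n \<ge> 2 \<longrightarrow> smallest_hex_points n l \<longrightarrow>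
       Max {(mu n (diag_mat l) (l i) (unit_vec i))\<^sup>2 | i. i < n}
         \<le> sqrt 3 * pi / 27 * (real n)\<^sup>2 + f n)"
proof (intro exI conjI allI impI)
  show "error_term \<in> o(\<lambda>n. (real n)\<^sup>2)" by (rule error_term_small_o)
  fix n l assume n2: "n \<ge> 2" and sm: "smallest_hex_points n l"
  have "(mu n (diag_mat l) (l i) (unit_vec i))\<^sup>2 \<le> sqrt 3 * pi / 27 * (real n)\<^sup>2 + error_term n"
    if i: "i < n" for i
  proof -
    have "(mu n (diag_mat l) (l i) (unit_vec i))\<^sup>2 \<le> max 1 ((\<Sum>j<n. (cmod (l j))\<^sup>2) / (sqrt 3)\<^sup>2)"
      using smallest_hex_points_separated[OF sm i] by (intro mu_diag_mat_power2_le[OF i n2]) auto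
    also have "\<dots> \<le> sqrt 3 * pi / 27 * (real n)\<^sup>2 + error_term n"
      using smallest_hex_points_mu_bound[OF sm] by simp
    finally show ?thesis .
  qed
  thus "Max {(mu n (diag_mat l) (l i) (unit_vec i))\<^sup>2 | i. i < n}
          \<le> sqrt 3 * pi / 27 * (real n)\<^sup>2 + error_term n"
    using n2 by (subst Max_le_iff) (auto intro!: exI[of _ 0])
qed

end
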